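(* Let $n\ge 3$, and let $F$ be the free group on $s_1,\dots,s_{n-1}$ and $R$ the normal closure in $F$ of the relators $[s_i,s_j]$ ($1\le i<j-1\le n-2$), $[s_i,s_{i+1},s_i]$ and $[s_i,s_{i+1},s_{i+1}]$ ($1\le i\le n-2$), $[[s_i,s_{i+1}],[s_{i+1},s_{i+2}]]$ ($1\le i\le n-3$), so that $F/R\cong\mathrm{UT}_n(\mathbb Z)$. Suppose that for integers $a_{ij}$ ($1\le i<j-1\le n-2$), $b_i,c_i$ ($1\le i\le n-2$) and $d_i\in\{0,1\}$ ($1\le i\le n-3$) the element $$\prod_{i<j-1}[s_i,s_j]^{a_{ij}}\cdot\prod_i[s_i,s_{i+1},s_i]^{b_i}\cdot\prod_i[s_i,s_{i+1},s_is_{i+1}^{-1}]^{c_i}\cdot\prod_i[[s_i,s_{i+1}],[s_{i+1},s_{i+2}]]^{d_i}$$ lies in $[R,F]$. Then all $a_{ij},b_i,c_i,d_i$ are zero.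
   Context: Commutator conventions: $[a,b]=a^{-1}b^{-1}ab$, and commutators are left-normed: $[a_1,\dots,a_k]=[[a_1,\dots,a_{k-1}],a_k]$. The isomorphism $F/R\cong\mathrm{UT}_n(\mathbb Z)$ sends $s_i$ to $I+E_{i,i+1}$. *)

theory Defs
  imports "HOL-Algebra.Generated_Groups"
begin

text \<open>A letter (True, x) is the generator x, (False, x) its inverse.\<close>
type_synonym 'a fword = "(bool \<times> 'a) list"

definition push_letter :: "bool \<times> 'a \<Rightarrow> 'a fword \<Rightarrow> 'a fword" where
  "push_letter x acc = (case acc of
       [] \<Rightarrow> [x]
     | y # ys \<Rightarrow> (if snd y = snd x \<and> fst y \<noteq> fst x then ys else x # acc))"

definition fred :: "'a fword \<Rightarrow> 'a fword" where
  "fred w = foldr push_letter w []"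

definition freduced :: "'a fword \<Rightarrow> bool" where
  "freduced w \<longleftrightarrow> fred w = w"

definition free_grp :: "'a set \<Rightarrow> 'a fword monoid" where
  "free_grp S = \<lparr> carrier = {w. freduced w \<and> snd ` set w \<subseteq> S},
                  mult = (\<lambda>u v. fred (u @ v)), one = [] \<rparr>"

definition fgen :: "'a \<Rightarrow> 'a fword" where
  "fgen x = [(True, x)]"

text \<open>Commutator convention: [a,b] = a^-1 b^-1 a b.\<close>
definition gcomm :: "('a, 'b) monoid_scheme \<Rightarrow> 'a \<Rightarrow> 'a \<Rightarrow> 'a" where
  "gcomm G a b = inv\<^bsub>G\<^esub> a \<otimes>\<^bsub>G\<^esub> inv\<^bsub>G\<^esub> b \<otimes>\<^bsub>G\<^esub> a \<otimes>\<^bsub>G\<^esub> b"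

definition normal_closure :: "('a, 'b) monoid_scheme \<Rightarrow> 'a set \<Rightarrow> 'a set" where
  "normal_closure G S =
     generate G {g \<otimes>\<^bsub>G\<^esub> x \<otimes>\<^bsub>G\<^esub> inv\<^bsub>G\<^esub> g | g x. g \<in> carrier G \<and> x \<in> S}"

definition comm_subgrp :: "('a, 'b) monoid_scheme \<Rightarrow> 'a set \<Rightarrow> 'a set \<Rightarrow> 'a set" where
  "comm_subgrp G H K = generate G {gcomm G h k | h k. h \<in> H \<and> k \<in> K}"

definition listprod :: "('a, 'b) monoid_scheme \<Rightarrow> 'a list \<Rightarrow> 'a" where
  "listprod G xs = foldr (\<lambda>x acc. x \<otimes>\<^bsub>G\<^esub> acc) xs \<one>\<^bsub>G\<^esub>"

abbreviation FG :: "nat \<Rightarrow> nat fword monoid" where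
  "FG n \<equiv> free_grp {1..n-1}"

definition ut_relators :: "nat \<Rightarrow> nat fword set" where
  "ut_relators n =
     {gcomm (FG n) (fgen i) (fgen j) | i j. 1 \<le> i \<and> i + 1 < j \<and> j \<le> n - 1}
   \<union> {gcomm (FG n) (gcomm (FG n) (fgen i) (fgen (i+1))) (fgen i) | i. 1 \<le> i \<and> i \<le> n - 2}
   \<union> {gcomm (FG n) (gcomm (FG n) (fgen i) (fgen (i+1))) (fgen (i+1)) | i. 1 \<le> i \<and> i \<le> n - 2}
   \<union> {gcomm (FG n) (gcomm (FG n) (fgen i) (fgen (i+1))) (gcomm (FG n) (fgen (i+1)) (fgen (i+2)))
        | i. 1 \<le> i \<and> i \<le> n - 3}"

definition RN :: "nat \<Rightarrow> nat fword set" where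
  "RN n = normal_closure (FG n) (ut_relators n)"

text \<open>The element of the theorem; products taken in lexicographic order of indices.\<close>
definition the_element ::
  "nat \<Rightarrow> (nat \<Rightarrow> nat \<Rightarrow> int) \<Rightarrow> (nat \<Rightarrow> int) \<Rightarrow> (nat \<Rightarrow> int) \<Rightarrow> (nat \<Rightarrow> int) \<Rightarrow> nat fword" where
  "the_element n a b c d =
     (let G = FG n; s = fgen; cm = gcomm G in
      listprod G [cm (s i) (s j) [^]\<^bsub>G\<^esub> a i j. i \<leftarrow> [1..<n], j \<leftarrow> [i+2..<n]]
      \<otimes>\<^bsub>G\<^esub> listprod G [cm (cm (s i) (s (i+1))) (s i) [^]\<^bsub>G\<^esub> b i. i \<leftarrow> [1..<n-1]]
      \<otimes>\<^bsub>G\<^esub> listprod G [cm (cm (s i) (s (i+1))) (s i \<otimes>\<^bsub>G\<^esub> inv\<^bsub>G\<^esub> s (i+1)) [^]\<^bsub>G\<^esub> c i. i \<leftarrow> [1..<n-1]]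
      \<otimes>\<^bsub>G\<^esub> listprod G [cm (cm (s i) (s (i+1))) (cm (s (i+1)) (s (i+2))) [^]\<^bsub>G\<^esub> d i. i \<leftarrow> [1..<n-2]])"

end

theory Submission
  imports Defs "HOL-Library.Z2"
begin

text \<open>
  A homomorphism \<open>h : F \<rightarrow> E\<close> under which every relator becomes central in the image of \<open>h\<close>
  maps \<open>R\<close> into that centre and hence kills \<open>[R, F]\<close>.  Choosing \<open>h\<close> by sending one to three
  generators to suitable unitriangular 5 \<times> 5 matrices (over \<open>\<int>\<close> or \<open>\<int>/2\<close>) and all
  others to \<open>1\<close>, the element of the theorem evaluates to a single elementary matrix raised to
  one of the exponents; since it must be trivial, that exponent vanishes.  Two tests give
  independent relations for \<open>b\<^sub>i, c\<^sub>i\<close>; the exponent \<open>d\<^sub>i \<in> {0, 1}\<close> is detected mod 2 once the other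
  exponents are known to be zero.
\<close>

lemma (in group) gcomm_closed [intro, simp]:
  "p \<in> carrier G \<Longrightarrow> q \<in> carrier G \<Longrightarrow> gcomm G p q \<in> carrier G"
  by (simp add: gcomm_def)

lemma (in group) gcomm_eq_one_if_commute:
  assumes p: "p \<in> carrier G" and q: "q \<in> carrier G" and pq: "p \<otimes> q = q \<otimes> p"
  shows "gcomm G p q = \<one>"
proof -
  have "gcomm G p q = inv p \<otimes> (inv q \<otimes> (q \<otimes> p))"
    using p q by (simp add: gcomm_def m_assoc pq)
  also have "\<dots> = \<one>"
    using p q by (simp add: m_assoc[symmetric])
  finally show ?thesis .
qed

lemma (in group) conj_eq_if_commute:
  assumes "p \<in> carrier G" "q \<in> carrier G" "p \<otimes> q = q \<otimes> p"
  shows "p \<otimes> q \<otimes> inv p = q"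
  using assms by (simp add: m_assoc)

lemma (in group) inv_commute:
  assumes p: "p \<in> carrier G" and q: "q \<in> carrier G" and pq: "p \<otimes> q = q \<otimes> p"
  shows "inv p \<otimes> q = q \<otimes> inv p"
proof -
  have "inv p \<otimes> q = inv p \<otimes> (q \<otimes> p) \<otimes> inv p"
    using p q by (simp add: m_assoc)
  also have "\<dots> = q \<otimes> inv p"
    using p q by (simp add: pq[symmetric] m_assoc[symmetric])
  finally show ?thesis .
qed

lemma (in group) mult_commute:
  assumes "p \<in> carrier G" "q \<in> carrier G" "r \<in> carrier G"
    and "p \<otimes> r = r \<otimes> p" "q \<otimes> r = r \<otimes> q"
  shows "p \<otimes> q \<otimes> r = r \<otimes> (p \<otimes> q)"
  using assms by (metis m_assoc)

lemma (in group) gcomm_one_left [simp]: "p \<in> carrier G \<Longrightarrow> gcomm G \<one> p = \<one>"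
  by (simp add: gcomm_def m_assoc)

lemma (in group) gcomm_one_right [simp]: "p \<in> carrier G \<Longrightarrow> gcomm G p \<one> = \<one>"
  by (simp add: gcomm_def)

lemma (in group) listprod_ones: "\<forall>x\<in>set xs. x = \<one> \<Longrightarrow> listprod G xs = \<one>"
  by (induction xs) (simp_all add: listprod_def)

lemma (in group) listprod_single:
  assumes "distinct xs" "x0 \<in> set xs" "\<And>x. x \<in> set xs \<Longrightarrow> x \<noteq> x0 \<Longrightarrow> f x = \<one>"
    and "f x0 \<in> carrier G"
  shows "listprod G (map f xs) = f x0"
  using assms
proof (induction xs)
  case (Cons y ys)
  show ?case
  proof (cases "y = x0")
    case True
    then have "listprod G (map f ys) = \<one>"
      using Cons.prems(1,3) by (intro listprod_ones) fastforce
    then show ?thesis using True Cons.prems(4) by (simp add: listprod_def)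
  next
    case False
    then show ?thesis using Cons by (simp add: listprod_def)
  qed
qed simp

lemma (in group) listprod_closed [intro]: "set xs \<subseteq> carrier G \<Longrightarrow> listprod G xs \<in> carrier G"
  by (induction xs) (auto simp: listprod_def)

lemma (in group_hom) hom_gcomm:
  "x \<in> carrier G \<Longrightarrow> y \<in> carrier G \<Longrightarrow> h (gcomm G x y) = gcomm H (h x) (h y)"
  by (simp add: gcomm_def)

lemma (in group_hom) hom_listprod:
  "set xs \<subseteq> carrier G \<Longrightarrow> h (listprod G xs) = listprod H (map h xs)"
  by (induction xs) (auto simp: listprod_def G.listprod_closed[unfolded listprod_def])

section \<open>Homomorphisms killing the commutator subgroup [N, G]\<close>

definition image_central :: "('a, 'c) monoid_scheme \<Rightarrow> ('b, 'd) monoid_scheme \<Rightarrow> ('a \<Rightarrow> 'b) \<Rightarrow> 'a set" where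
  "image_central G H h = {x \<in> carrier G. \<forall>y\<in>carrier G. h x \<otimes>\<^bsub>H\<^esub> h y = h y \<otimes>\<^bsub>H\<^esub> h x}"

lemma (in group_hom) image_central_subgroup: "subgroup (image_central G H h) G"
proof (rule G.subgroupI)
  show "image_central G H h \<noteq> {}"
    by (auto simp: image_central_def intro!: exI[of _ "\<one>\<^bsub>G\<^esub>"])
next
  fix x assume x: "x \<in> image_central G H h"
  then have xc: "x \<in> carrier G" and comm: "\<And>y. y \<in> carrier G \<Longrightarrow> h x \<otimes>\<^bsub>H\<^esub> h y = h y \<otimes>\<^bsub>H\<^esub> h x"
    by (auto simp: image_central_def)
  have "h (inv\<^bsub>G\<^esub> x) \<otimes>\<^bsub>H\<^esub> h y = h y \<otimes>\<^bsub>H\<^esub> h (inv\<^bsub>G\<^esub> x)" if y: "y \<in> carrier G" for y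
    using H.inv_commute[OF _ _ comm[OF y]] xc y by simp
  then show "inv\<^bsub>G\<^esub> x \<in> image_central G H h"
    using xc unfolding image_central_def by blast
next
  fix x z assume x: "x \<in> image_central G H h" and z: "z \<in> image_central G H h"
  have "h (x \<otimes>\<^bsub>G\<^esub> z) \<otimes>\<^bsub>H\<^esub> h y = h y \<otimes>\<^bsub>H\<^esub> h (x \<otimes>\<^bsub>G\<^esub> z)" if y: "y \<in> carrier G" for y
  proof -
    have "h x \<otimes>\<^bsub>H\<^esub> h z \<otimes>\<^bsub>H\<^esub> h y = h y \<otimes>\<^bsub>H\<^esub> (h x \<otimes>\<^bsub>H\<^esub> h z)"
      using x z y unfolding image_central_def by (intro H.mult_commute) auto
    moreover have "x \<in> carrier G" "z \<in> carrier G"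
      using x z by (auto simp: image_central_def)
    ultimately show ?thesis
      using y by simp
  qed
  then show "x \<otimes>\<^bsub>G\<^esub> z \<in> image_central G H h"
    using x z unfolding image_central_def by blast
qed (auto simp: image_central_def)

lemma (in group_hom) comm_normal_closure_in_kernel:
  assumes central: "Rel \<subseteq> image_central G H h"
  shows "comm_subgrp G (normal_closure G Rel) (carrier G) \<subseteq> kernel G H h"
proof -
  have "normal_closure G Rel \<subseteq> image_central G H h"
    unfolding normal_closure_def
  proof (rule G.generate_subgroup_incl[OF _ image_central_subgroup], clarify)
    fix a r assume a: "a \<in> carrier G" and r: "r \<in> Rel"
    then have rc: "r \<in> carrier G" and comm: "\<And>y. y \<in> carrier G \<Longrightarrow> h r \<otimes>\<^bsub>H\<^esub> h y = h y \<otimes>\<^bsub>H\<^esub> h r"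
      using central by (auto simp: image_central_def)
    have "h (a \<otimes>\<^bsub>G\<^esub> r \<otimes>\<^bsub>G\<^esub> inv\<^bsub>G\<^esub> a) = h a \<otimes>\<^bsub>H\<^esub> h r \<otimes>\<^bsub>H\<^esub> inv\<^bsub>H\<^esub> h a"
      using a rc by simp
    also have "\<dots> = h r"
      using a rc comm[OF a, symmetric] by (intro H.conj_eq_if_commute) auto
    finally have conj: "h (a \<otimes>\<^bsub>G\<^esub> r \<otimes>\<^bsub>G\<^esub> inv\<^bsub>G\<^esub> a) = h r" .
    show "a \<otimes>\<^bsub>G\<^esub> r \<otimes>\<^bsub>G\<^esub> inv\<^bsub>G\<^esub> a \<in> image_central G H h"
      unfolding image_central_def mem_Collect_eq conj using a rc comm by blast
  qed
  then show ?thesis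
    unfolding comm_subgrp_def
  proof (intro G.generate_subgroup_incl[OF _ subgroup_kernel], clarify)
    fix x y assume "x \<in> normal_closure G Rel" "y \<in> carrier G"
    moreover assume "normal_closure G Rel \<subseteq> image_central G H h"
    ultimately have x: "x \<in> carrier G" and "h x \<otimes>\<^bsub>H\<^esub> h y = h y \<otimes>\<^bsub>H\<^esub> h x"
      by (auto simp: image_central_def)
    then have "gcomm H (h x) (h y) = \<one>\<^bsub>H\<^esub>"
      using \<open>y \<in> carrier G\<close> by (intro H.gcomm_eq_one_if_commute) auto
    then show "gcomm G x y \<in> kernel G H h"
      using x \<open>y \<in> carrier G\<close> by (simp add: kernel_def hom_gcomm)
  qed
qed

section \<open>Reduced words and the free group\<close>

definition flip_letter :: "bool \<times> 'a \<Rightarrow> bool \<times> 'a" where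
  "flip_letter x = (\<not> fst x, snd x)"

definition word_inv :: "'a fword \<Rightarrow> 'a fword" where
  "word_inv w = rev (map flip_letter w)"

abbreviation push_word :: "'a fword \<Rightarrow> 'a fword \<Rightarrow> 'a fword" where
  "push_word w r \<equiv> foldr push_letter w r"

fun reduced :: "'a fword \<Rightarrow> bool" where
  "reduced [] = True"
| "reduced [x] = True"
| "reduced (x # y # ys) \<longleftrightarrow> \<not> (snd x = snd y \<and> fst x \<noteq> fst y) \<and> reduced (y # ys)"

lemma reduced_tl: "reduced (x # w) \<Longrightarrow> reduced w"
  by (cases w) auto

lemma reduced_push_letter: "reduced r \<Longrightarrow> reduced (push_letter x r)"
  by (cases r) (auto simp: push_letter_def reduced_tl)

lemma reduced_push_word: "reduced r \<Longrightarrow> reduced (push_word w r)"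
  by (induction w) (auto simp: reduced_push_letter)

lemma reduced_fred: "reduced (fred w)"
  unfolding fred_def by (rule reduced_push_word) simp

lemma fred_reduced: "reduced w \<Longrightarrow> fred w = w"
proof (induction w)
  case (Cons x w)
  then have "fred w = w"
    using reduced_tl by blast
  then have "fred (x # w) = push_letter x w"
    by (simp add: fred_def)
  also have "\<dots> = x # w"
    using Cons.prems by (cases w) (auto simp: push_letter_def)
  finally show ?case .
qed (simp add: fred_def)

lemma freduced_iff_reduced: "freduced w \<longleftrightarrow> reduced w"
  by (metis freduced_def fred_reduced reduced_fred)

text \<open>Pushing a letter and then its inverse onto a reduced word changes nothing; hence pushing
  commutes with free reduction.\<close>

lemma push_letter_cancel:
  assumes "reduced r" shows "push_letter x (push_letter (flip_letter x) r) = r"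
proof (cases r)
  case (Cons y ys)
  show ?thesis
  proof (cases "y = x")
    case True
    then have "push_letter (flip_letter x) r = ys"
      using Cons by (auto simp: push_letter_def flip_letter_def)
    moreover have "push_letter x ys = r"
      using Cons assms True by (cases ys) (auto simp: push_letter_def)
    ultimately show ?thesis by simp
  next
    case False
    then have "push_letter (flip_letter x) r = flip_letter x # r"
      using Cons by (auto simp: push_letter_def flip_letter_def prod_eq_iff)
    then show ?thesis by (auto simp: push_letter_def flip_letter_def)
  qed
qed (auto simp: push_letter_def flip_letter_def)

lemma push_word_push_letter:
  assumes "reduced w" "reduced r"
  shows "push_word (push_letter x w) r = push_letter x (push_word w r)"
proof (cases w)
  case (Cons y ys)
  show ?thesis
  proof (cases "snd y = snd x \<and> fst y \<noteq> fst x")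
    case True
    then have "y = flip_letter x"
      by (simp add: flip_letter_def prod_eq_iff)
    then have "push_letter x (push_word w r) = push_letter x (push_letter (flip_letter x) (push_word ys r))"
      using Cons by simp
    also have "\<dots> = push_word ys r"
      using assms(2) by (simp add: push_letter_cancel reduced_push_word)
    finally show ?thesis using Cons True by (simp add: push_letter_def)
  next
    case False
    then have "push_letter x w = x # w"
      using Cons by (simp add: push_letter_def)
    then show ?thesis by simp
  qed
qed (simp add: push_letter_def)

lemma push_word_fred: "reduced r \<Longrightarrow> push_word (fred w) r = push_word w r"
proof (induction w)
  case (Cons x w)
  have "push_word (fred (x # w)) r = push_letter x (push_word (fred w) r)"
    using push_word_push_letter[OF reduced_fred Cons.prems] by (simp add: fred_def)
  then show ?case using Cons by simp
qed (simp add: fred_def)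

lemma push_word_inv: "reduced r \<Longrightarrow> push_word w (push_word (word_inv w) r) = r"
proof (induction w arbitrary: r)
  case (Cons x w)
  have "push_word (x # w) (push_word (word_inv (x # w)) r)
      = push_letter x (push_word w (push_word (word_inv w) (push_letter (flip_letter x) r)))"
    by (simp add: word_inv_def)
  also have "\<dots> = r"
    using Cons reduced_push_letter push_letter_cancel by metis
  finally show ?case .
qed (simp add: word_inv_def)

lemma fred_append: "fred (u @ v) = push_word u (fred v)"
  by (simp add: fred_def)

lemma set_fred: "set (fred w) \<subseteq> set w"
proof -
  have "set (push_word w r) \<subseteq> set w \<union> set r" for r :: "'a fword"
  proof (induction w)
    case (Cons x w)
    have "set (push_letter x s) \<subseteq> insert x (set s)" for s
      by (cases s) (auto simp: push_letter_def)
    then show ?case using Cons by fastforce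
  qed simp
  from this[of "[]"] show ?thesis by (simp add: fred_def)
qed

lemma free_grp_group: "group (free_grp S)"
proof (rule groupI)
  fix x y :: "'a fword"
  assume "x \<in> carrier (free_grp S)" "y \<in> carrier (free_grp S)"
  then show "x \<otimes>\<^bsub>free_grp S\<^esub> y \<in> carrier (free_grp S)"
    using set_fred[of "x @ y"] by (fastforce simp: free_grp_def freduced_iff_reduced reduced_fred)
next
  fix x y z :: "'a fword"
  have "fred (fred (x @ y) @ z) = push_word (x @ y) (fred z)"
    by (simp only: fred_append[of "fred (x @ y)"] push_word_fred reduced_fred)
  moreover have "fred (x @ fred (y @ z)) = push_word x (fred (y @ z))"
    by (simp only: fred_append[of x] fred_reduced reduced_fred)
  ultimately show "x \<otimes>\<^bsub>free_grp S\<^esub> y \<otimes>\<^bsub>free_grp S\<^esub> z = x \<otimes>\<^bsub>free_grp S\<^esub> (y \<otimes>\<^bsub>free_grp S\<^esub> z)"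
    by (simp add: free_grp_def fred_append)
next
  fix x :: "'a fword"
  assume x: "x \<in> carrier (free_grp S)"
  have "fred (word_inv x) \<in> carrier (free_grp S)"
    using x set_fred[of "word_inv x"]
    by (fastforce simp: free_grp_def freduced_iff_reduced reduced_fred word_inv_def flip_letter_def)
  moreover have "fred (fred (word_inv x) @ x) = []"
  proof -
    have "fred (fred (word_inv x) @ x) = push_word (word_inv x) (fred x)"
      by (simp add: fred_append push_word_fred reduced_fred)
    also have "\<dots> = push_word (word_inv x) (push_word (word_inv (word_inv x)) [])"
      by (simp add: fred_def word_inv_def rev_map comp_def flip_letter_def)
    also have "\<dots> = []"
      by (rule push_word_inv) simp
    finally show ?thesis .
  qed
  ultimately show "\<exists>y\<in>carrier (free_grp S). y \<otimes>\<^bsub>free_grp S\<^esub> x = \<one>\<^bsub>free_grp S\<^esub>"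
    by (auto simp: free_grp_def)
qed (auto simp: free_grp_def freduced_def fred_def)

lemma fgen_carrier: "i \<in> S \<Longrightarrow> fgen i \<in> carrier (free_grp S)"
  by (simp add: fgen_def free_grp_def freduced_iff_reduced)

definition eval_letter :: "('e, 'm) monoid_scheme \<Rightarrow> (nat \<Rightarrow> 'e) \<Rightarrow> bool \<times> nat \<Rightarrow> 'e" where
  "eval_letter E g x = (if fst x then g (snd x) else inv\<^bsub>E\<^esub> g (snd x))"

definition eval_word :: "('e, 'm) monoid_scheme \<Rightarrow> (nat \<Rightarrow> 'e) \<Rightarrow> nat fword \<Rightarrow> 'e" where
  "eval_word E g w = foldr (\<lambda>x acc. eval_letter E g x \<otimes>\<^bsub>E\<^esub> acc) w \<one>\<^bsub>E\<^esub>"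

locale word_eval = group E for E :: "('e, 'm) monoid_scheme" (structure) +
  fixes g :: "nat \<Rightarrow> 'e"
  assumes g_closed [simp]: "g i \<in> carrier E"
begin

abbreviation ev :: "nat fword \<Rightarrow> 'e" where "ev \<equiv> eval_word E g"

lemma eval_letter_closed [simp]: "eval_letter E g x \<in> carrier E"
  by (simp add: eval_letter_def)

lemma ev_closed [simp]: "ev w \<in> carrier E"
  by (induction w) (auto simp: eval_word_def)

lemma ev_Nil [simp]: "ev [] = \<one>"
  and ev_Cons [simp]: "ev (x # w) = eval_letter E g x \<otimes> ev w"
  by (simp_all add: eval_word_def)

lemma ev_append: "ev (u @ v) = ev u \<otimes> ev v"
  by (induction u) (auto simp: m_assoc)

lemma ev_push_letter: "ev (push_letter x r) = eval_letter E g x \<otimes> ev r"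
proof (cases r)
  case (Cons y ys)
  show ?thesis
  proof (cases "snd y = snd x \<and> fst y \<noteq> fst x")
    case True
    then have "eval_letter E g x \<otimes> eval_letter E g y = \<one>"
      by (auto simp: eval_letter_def)
    then have "eval_letter E g x \<otimes> ev r = ev ys"
      using Cons by (simp add: m_assoc[symmetric])
    then show ?thesis using Cons True by (simp add: push_letter_def)
  qed (use Cons in \<open>auto simp: push_letter_def\<close>)
qed (simp add: push_letter_def)

lemma ev_fred: "ev (fred w) = ev w"
proof -
  have "ev (push_word w r) = ev w \<otimes> ev r" for r
    by (induction w) (auto simp: ev_push_letter m_assoc)
  from this[of "[]"] show ?thesis by (simp add: fred_def)
qed

lemma ev_group_hom: "group_hom (free_grp S) E ev"
proof -
  have "ev \<in> hom (free_grp S) E"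
    by (rule homI) (auto simp: free_grp_def ev_fred ev_append)
  then show ?thesis
    by (simp add: group_hom_def group_hom_axioms_def free_grp_group is_group)
qed

lemma ev_fgen [simp]: "ev (fgen i) = g i"
  by (simp add: fgen_def eval_letter_def)

lemma commute_ev:
  assumes e: "e \<in> carrier E" and comm: "\<And>i. e \<otimes> g i = g i \<otimes> e"
  shows "e \<otimes> ev w = ev w \<otimes> e"
proof (induction w)
  case (Cons x w)
  have "e \<otimes> eval_letter E g x = eval_letter E g x \<otimes> e"
    using inv_commute[OF _ e comm[symmetric]] e comm by (auto simp: eval_letter_def)
  then show ?case
    unfolding ev_Cons using Cons e by (intro mult_commute[symmetric]) auto
qed (simp add: e)

lemma ev_comm_normal_closure:
  assumes Rel: "Rel \<subseteq> carrier (free_grp S)"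
    and comm: "\<And>r i. r \<in> Rel \<Longrightarrow> ev r \<otimes> g i = g i \<otimes> ev r"
    and x: "x \<in> comm_subgrp (free_grp S) (normal_closure (free_grp S) Rel) (carrier (free_grp S))"
  shows "ev x = \<one>"
proof -
  interpret h: group_hom "free_grp S" E ev
    by (rule ev_group_hom)
  have "Rel \<subseteq> image_central (free_grp S) E ev"
    using Rel commute_ev[OF ev_closed comm] by (auto simp: image_central_def)
  then show ?thesis
    using h.comm_normal_closure_in_kernel x by (auto simp: kernel_def)
qed

end

definition element_value ::
  "('e, 'm) monoid_scheme \<Rightarrow> (nat \<Rightarrow> 'e) \<Rightarrow> nat \<Rightarrow> (nat \<Rightarrow> nat \<Rightarrow> int) \<Rightarrow> (nat \<Rightarrow> int) \<Rightarrow> (nat \<Rightarrow> int) \<Rightarrow> (nat \<Rightarrow> int) \<Rightarrow> 'e" where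
  "element_value G s n a b c d =
     (let cm = gcomm G in
      listprod G [cm (s i) (s j) [^]\<^bsub>G\<^esub> a i j. i \<leftarrow> [1..<n], j \<leftarrow> [i+2..<n]]
      \<otimes>\<^bsub>G\<^esub> listprod G [cm (cm (s i) (s (i+1))) (s i) [^]\<^bsub>G\<^esub> b i. i \<leftarrow> [1..<n-1]]
      \<otimes>\<^bsub>G\<^esub> listprod G [cm (cm (s i) (s (i+1))) (s i \<otimes>\<^bsub>G\<^esub> inv\<^bsub>G\<^esub> s (i+1)) [^]\<^bsub>G\<^esub> c i. i \<leftarrow> [1..<n-1]]
      \<otimes>\<^bsub>G\<^esub> listprod G [cm (cm (s i) (s (i+1))) (cm (s (i+1)) (s (i+2))) [^]\<^bsub>G\<^esub> d i. i \<leftarrow> [1..<n-2]])"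

definition relator_values :: "('e, 'm) monoid_scheme \<Rightarrow> (nat \<Rightarrow> 'e) \<Rightarrow> nat \<Rightarrow> 'e set" where
  "relator_values G s n =
     {gcomm G (s i) (s j) | i j. 1 \<le> i \<and> i + 1 < j \<and> j \<le> n - 1}
   \<union> {gcomm G (gcomm G (s i) (s (i+1))) (s i) | i. 1 \<le> i \<and> i \<le> n - 2}
   \<union> {gcomm G (gcomm G (s i) (s (i+1))) (s (i+1)) | i. 1 \<le> i \<and> i \<le> n - 2}
   \<union> {gcomm G (gcomm G (s i) (s (i+1))) (gcomm G (s (i+1)) (s (i+2))) | i. 1 \<le> i \<and> i \<le> n - 3}"

lemma the_element_eq: "the_element n a b c d = element_value (FG n) fgen n a b c d"
  by (simp add: the_element_def element_value_def Let_def)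

lemma ut_relators_eq: "ut_relators n = relator_values (FG n) fgen n"
  by (simp add: ut_relators_def relator_values_def)

lemma (in group_hom) hom_element_value:
  assumes s: "\<And>i. 1 \<le> i \<Longrightarrow> i < n \<Longrightarrow> s i \<in> carrier G"
  shows "h (element_value G s n a b c d) = element_value H (h \<circ> s) n a b c d"
proof -
  let ?L1 = "[gcomm G (s i) (s j) [^]\<^bsub>G\<^esub> a i j. i \<leftarrow> [1..<n], j \<leftarrow> [i+2..<n]]"
  let ?L2 = "[gcomm G (gcomm G (s i) (s (i+1))) (s i) [^]\<^bsub>G\<^esub> b i. i \<leftarrow> [1..<n-1]]"
  let ?L3 = "[gcomm G (gcomm G (s i) (s (i+1))) (s i \<otimes>\<^bsub>G\<^esub> inv\<^bsub>G\<^esub> s (i+1)) [^]\<^bsub>G\<^esub> c i. i \<leftarrow> [1..<n-1]]"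
  let ?L4 = "[gcomm G (gcomm G (s i) (s (i+1))) (gcomm G (s (i+1)) (s (i+2))) [^]\<^bsub>G\<^esub> d i. i \<leftarrow> [1..<n-2]]"
  have closed: "set ?L1 \<subseteq> carrier G" "set ?L2 \<subseteq> carrier G" "set ?L3 \<subseteq> carrier G" "set ?L4 \<subseteq> carrier G"
    using s by (auto intro!: G.int_pow_closed)
  have "map h ?L1 = [gcomm H (h (s i)) (h (s j)) [^]\<^bsub>H\<^esub> a i j. i \<leftarrow> [1..<n], j \<leftarrow> [i+2..<n]]"
    "map h ?L2 = [gcomm H (gcomm H (h (s i)) (h (s (i+1)))) (h (s i)) [^]\<^bsub>H\<^esub> b i. i \<leftarrow> [1..<n-1]]"
    "map h ?L3 = [gcomm H (gcomm H (h (s i)) (h (s (i+1)))) (h (s i) \<otimes>\<^bsub>H\<^esub> inv\<^bsub>H\<^esub> h (s (i+1))) [^]\<^bsub>H\<^esub> c i.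
                   i \<leftarrow> [1..<n-1]]"
    "map h ?L4 = [gcomm H (gcomm H (h (s i)) (h (s (i+1)))) (gcomm H (h (s (i+1))) (h (s (i+2)))) [^]\<^bsub>H\<^esub> d i.
                   i \<leftarrow> [1..<n-2]]"
    using s by (auto simp: map_concat hom_gcomm hom_int_pow intro!: arg_cong[where f = concat])
  with closed show ?thesis
    by (simp add: element_value_def Let_def hom_listprod G.listprod_closed del: map_concat map_map)
qed

lemma (in group_hom) hom_relator_values:
  assumes s: "\<And>i. 1 \<le> i \<Longrightarrow> i < n \<Longrightarrow> s i \<in> carrier G" and r: "r \<in> relator_values G s n"
  shows "h r \<in> relator_values H (h \<circ> s) n"
  using r unfolding relator_values_def
  by (elim UnE CollectE exE conjE) (auto simp: s hom_gcomm)

lemma fgen_carrier_FG: "1 \<le> i \<Longrightarrow> i < n \<Longrightarrow> fgen i \<in> carrier (FG n)"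
  by (intro fgen_carrier) auto

lemma relators_carrier: "ut_relators n \<subseteq> carrier (FG n)"
  unfolding ut_relators_def
  by (auto simp: fgen_carrier intro!: group.gcomm_closed[OF free_grp_group])

context word_eval
begin

lemma element_value_trivial:
  assumes comm: "\<And>r i. r \<in> relator_values E g n \<Longrightarrow> r \<otimes> g i = g i \<otimes> r"
    and x: "the_element n a b c d \<in> comm_subgrp (FG n) (RN n) (carrier (FG n))"
  shows "element_value E g n a b c d = \<one>"
proof -
  interpret h: group_hom "FG n" E ev
    by (rule ev_group_hom)
  have "ev r \<otimes> g i = g i \<otimes> ev r" if "r \<in> ut_relators n" for r i
    using h.hom_relator_values[OF fgen_carrier_FG] that comm by (simp add: ut_relators_eq comp_def)
  then have "ev (the_element n a b c d) = \<one>"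
    using ev_comm_normal_closure[OF relators_carrier _ x[unfolded RN_def]] by blast
  then show ?thesis
    using h.hom_element_value[OF fgen_carrier_FG] by (simp add: the_element_eq comp_def)
qed

end

definition index_pairs :: "nat \<Rightarrow> (nat \<times> nat) list" where
  "index_pairs n = [(i, j). i \<leftarrow> [1..<n], j \<leftarrow> [i+2..<n]]"

lemma map_index_pairs: "[F i j. i \<leftarrow> [1..<n], j \<leftarrow> [i+2..<n]] = map (\<lambda>(i, j). F i j) (index_pairs n)"
  by (simp add: index_pairs_def map_concat comp_def)

lemma distinct_index_pairs: "distinct (index_pairs n)"
proof -
  have "distinct (concat (map (\<lambda>i. map (Pair i) [i+2..<n]) xs))" if "distinct xs" for xs
    using that by (induction xs) (auto simp: distinct_map inj_on_def)
  then show ?thesis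
    by (simp add: index_pairs_def)
qed

lemma set_index_pairs: "set (index_pairs n) = {(i, j). 1 \<le> i \<and> i + 2 \<le> j \<and> j < n}"
  by (force simp: index_pairs_def)

section \<open>Unitriangular 5 \<times> 5 matrices\<close>

text \<open>Upper unitriangular 5 \<times> 5 matrices over a commutative ring, stored by their ten entries
  above the diagonal; \<open>ut_mul\<close> is matrix multiplication and \<open>ut_inv\<close> the matrix inverse.\<close>

datatype 'r ut5 = UT5 (e12: 'r) (e13: 'r) (e14: 'r) (e15: 'r) (e23: 'r) (e24: 'r) (e25: 'r)
  (e34: 'r) (e35: 'r) (e45: 'r)

definition ut_mul :: "'r::comm_ring_1 ut5 \<Rightarrow> 'r ut5 \<Rightarrow> 'r ut5" where
  "ut_mul a b = UT5 (e12 a + e12 b) (e13 a + e13 b + e12 a * e23 b)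
     (e14 a + e14 b + e12 a * e24 b + e13 a * e34 b)
     (e15 a + e15 b + e12 a * e25 b + e13 a * e35 b + e14 a * e45 b)
     (e23 a + e23 b) (e24 a + e24 b + e23 a * e34 b)
     (e25 a + e25 b + e23 a * e35 b + e24 a * e45 b)
     (e34 a + e34 b) (e35 a + e35 b + e34 a * e45 b) (e45 a + e45 b)"

definition ut_one :: "'r::comm_ring_1 ut5" where
  "ut_one = UT5 0 0 0 0 0 0 0 0 0 0"

definition ut_inv :: "'r::comm_ring_1 ut5 \<Rightarrow> 'r ut5" where
  "ut_inv a = (let y12 = - e12 a; y23 = - e23 a; y34 = - e34 a; y45 = - e45 a;
     y13 = - e13 a - y12 * e23 a; y24 = - e24 a - y23 * e34 a; y35 = - e35 a - y34 * e45 a;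
     y14 = - e14 a - y12 * e24 a - y13 * e34 a; y25 = - e25 a - y23 * e35 a - y24 * e45 a;
     y15 = - e15 a - y12 * e25 a - y13 * e35 a - y14 * e45 a
   in UT5 y12 y13 y14 y15 y23 y24 y25 y34 y35 y45)"

definition UT :: "'r::comm_ring_1 ut5 monoid" where
  "UT = \<lparr>carrier = UNIV, mult = ut_mul, one = ut_one\<rparr>"

lemma UT_simps [simp]: "carrier UT = UNIV" "mult UT = ut_mul" "one UT = ut_one"
  by (simp_all add: UT_def)

lemmas ut_defs = ut_mul_def ut_one_def ut_inv_def Let_def

lemma UT_group: "group (UT :: 'r::comm_ring_1 ut5 monoid)"
proof (rule groupI)
  fix x y z :: "'r ut5"
  show "x \<otimes>\<^bsub>UT\<^esub> y \<otimes>\<^bsub>UT\<^esub> z = x \<otimes>\<^bsub>UT\<^esub> (y \<otimes>\<^bsub>UT\<^esub> z)"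
    by (simp add: ut_mul_def algebra_simps)
  show "\<one>\<^bsub>UT\<^esub> \<otimes>\<^bsub>UT\<^esub> x = x"
    by (cases x) (simp add: ut_defs)
  show "\<exists>y\<in>carrier UT. y \<otimes>\<^bsub>UT\<^esub> x = \<one>\<^bsub>UT\<^esub>"
    by (rule bexI[of _ "ut_inv x"]) (simp_all add: ut_defs algebra_simps)
qed simp_all

lemma UT_inv: "inv\<^bsub>UT\<^esub> x = ut_inv (x :: 'r::comm_ring_1 ut5)"
  by (rule group.inv_equality[OF UT_group]) (simp_all add: ut_defs algebra_simps)

lemma gcomm_UT: "gcomm UT x y = ut_mul (ut_mul (ut_mul (ut_inv x) (ut_inv y)) x) y"
  by (simp add: gcomm_def UT_inv)

lemma word_eval_UT: "word_eval UT (g :: nat \<Rightarrow> 'r::comm_ring_1 ut5)"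
  by (simp add: word_eval_def word_eval_axioms_def UT_group)

definition elem14 :: "'r::comm_ring_1 \<Rightarrow> 'r ut5" where
  "elem14 k = UT5 0 0 k 0 0 0 0 0 0 0"

lemma elem14_zero: "elem14 0 = ut_one"
  by (simp add: elem14_def ut_one_def)

lemma elem14_eq_one_iff: "elem14 k = ut_one \<longleftrightarrow> k = 0"
  by (simp add: elem14_def ut_one_def)

lemma elem14_mul: "ut_mul (elem14 k) (elem14 l) = elem14 (k + l)"
  by (simp add: elem14_def ut_mul_def)

lemma elem14_int_pow: "elem14 k [^]\<^bsub>UT\<^esub> (m::int) = elem14 (of_int m * k)"
proof -
  have nat_pow: "elem14 k [^]\<^bsub>UT\<^esub> (j::nat) = elem14 (of_nat j * k)" for j k
    by (induction j) (simp_all add: elem14_def ut_defs algebra_simps)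
  show ?thesis
    by (simp add: int_pow_def2 nat_pow UT_inv) (simp add: elem14_def ut_defs)
qed

lemma elem14_commute: "e45 x = 0 \<Longrightarrow> ut_mul (elem14 k) x = ut_mul x (elem14 k)"
  by (cases x) (simp add: elem14_def ut_mul_def algebra_simps)

definition elem15 :: "'r::comm_ring_1 \<Rightarrow> 'r ut5" where
  "elem15 k = UT5 0 0 0 k 0 0 0 0 0 0"

lemma elem15_central: "ut_mul (elem15 k) x = ut_mul x (elem15 k)"
  by (cases x) (simp add: elem15_def ut_mul_def algebra_simps)

lemma UT_gcomm_one [simp]: "gcomm UT ut_one x = ut_one" "gcomm UT x ut_one = ut_one"
  using group.gcomm_one_left[OF UT_group] group.gcomm_one_right[OF UT_group] by simp_all

lemma UT_pow_one [simp]: "ut_one [^]\<^bsub>UT\<^esub> (k::int) = ut_one"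
  using group.int_pow_one[OF UT_group, of k] by simp

lemma ut_mul_one [simp]: "ut_mul ut_one x = x" "ut_mul x ut_one = x"
  by (cases x, simp add: ut_mul_def ut_one_def)+

lemma ut_one_in_range_elem14 [simp]: "ut_one \<in> range elem14"
  using elem14_zero by (metis rangeI)

section \<open>The test homomorphisms\<close>

lemma elem14_test:
  fixes g :: "nat \<Rightarrow> 'r::comm_ring_1 ut5"
  assumes x: "the_element n a b c d \<in> comm_subgrp (FG n) (RN n) (carrier (FG n))"
    and e45: "\<And>i. e45 (g i) = 0"
    and rel: "relator_values UT g n \<subseteq> range elem14"
    and val: "element_value UT g n a b c d = elem14 k"
  shows "k = 0"
proof -
  interpret word_eval UT g
    by (rule word_eval_UT)
  have "r \<otimes>\<^bsub>UT\<^esub> g i = g i \<otimes>\<^bsub>UT\<^esub> r" if "r \<in> relator_values UT g n" for r i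
    using that rel elem14_commute[OF e45] by auto
  then show ?thesis
    using element_value_trivial[OF _ x] val by (simp add: elem14_eq_one_iff)
qed

definition m12 :: "'r::comm_ring_1 ut5" where "m12 = UT5 1 0 0 0 0 0 0 0 0 0"
definition m24 :: "'r::comm_ring_1 ut5" where "m24 = UT5 0 0 0 0 0 1 0 0 0 0"
definition m23 :: "'r::comm_ring_1 ut5" where "m23 = UT5 0 0 0 0 1 0 0 0 0 0"
definition m12_34 :: "'r::comm_ring_1 ut5" where "m12_34 = UT5 1 0 0 0 0 0 0 1 0 0"
definition m15_23_45 :: "'r::comm_ring_1 ut5" where "m15_23_45 = UT5 0 0 0 1 1 0 0 0 0 1"
definition m14_25_34 :: "'r::comm_ring_1 ut5" where "m14_25_34 = UT5 0 0 1 0 0 0 1 1 0 0"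

lemmas m_defs = m12_def m24_def m23_def m12_34_def m15_23_45_def m14_25_34_def

lemma m_e45 [simp]: "e45 m12 = 0" "e45 m24 = 0" "e45 m23 = 0" "e45 m12_34 = 0" "e45 ut_one = 0"
  by (simp_all add: m_defs ut_one_def)

lemma gcomm_m12_m24: "gcomm UT m12 m24 = elem14 1"
  by (simp add: gcomm_UT m_defs ut_defs elem14_def)

lemma gcomm_m12_34_m23:
  "gcomm UT (gcomm UT m12_34 m23) m12_34 = elem14 2"
  "gcomm UT (gcomm UT m12_34 m23) m23 = elem14 0"
  "gcomm UT (gcomm UT m12_34 m23) (ut_mul m12_34 (ut_inv m23)) = elem14 2"
  "gcomm UT (gcomm UT m23 m12_34) m23 = elem14 0"
  "gcomm UT (gcomm UT m23 m12_34) m12_34 = elem14 (-2)"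
  "gcomm UT (gcomm UT m23 m12_34) (ut_mul m23 (ut_inv m12_34)) = elem14 2"
  by (simp_all add: gcomm_UT m_defs ut_defs elem14_def)

lemma gcomm_mod2:
  "gcomm UT (gcomm UT m12_34 m15_23_45) (gcomm UT m15_23_45 m14_25_34) = (elem15 1 :: bit ut5)"
  "gcomm UT m12_34 m14_25_34 = (elem15 1 :: bit ut5)"
  "gcomm UT (gcomm UT m12_34 m15_23_45) m12_34 = (elem15 1 :: bit ut5)"
  "gcomm UT (gcomm UT m12_34 m15_23_45) m15_23_45 = (elem15 1 :: bit ut5)"
  "gcomm UT (gcomm UT m15_23_45 m14_25_34) m15_23_45 = (ut_one :: bit ut5)"
  "gcomm UT (gcomm UT m15_23_45 m14_25_34) m14_25_34 = (ut_one :: bit ut5)"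
  by (simp_all add: gcomm_UT m_defs ut_defs elem15_def)

text \<open>Test for \<open>a\<^sub>i\<^sub>j\<close>: send \<open>s\<^sub>i \<mapsto> 1 + E\<^sub>1\<^sub>2\<close>, \<open>s\<^sub>j \<mapsto> 1 + E\<^sub>2\<^sub>4\<close> and all other generators to \<open>1\<close>.
  Only the factor \<open>[s\<^sub>i, s\<^sub>j]\<^bsup>a\<^sub>i\<^sub>j\<^esup>\<close> survives, with value \<open>1 + a\<^sub>i\<^sub>j E\<^sub>1\<^sub>4\<close>.\<close>

lemma pair_exponent_zero:
  fixes a :: "nat \<Rightarrow> nat \<Rightarrow> int"
  assumes x: "the_element n a b c d \<in> comm_subgrp (FG n) (RN n) (carrier (FG n))"
    and ij: "1 \<le> i0" "i0 + 1 < j0" "j0 \<le> n - 1"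
  shows "a i0 j0 = 0"
proof (rule elem14_test[OF x])
  define g :: "nat \<Rightarrow> int ut5" where "g k = (if k = i0 then m12 else if k = j0 then m24 else ut_one)" for k
  have adjacent: "gcomm UT (g i) (g (i+1)) = ut_one" for i
    using ij by (auto simp: g_def)
  have pair: "gcomm UT (g i) (g j) \<in> range elem14" if "i < j" for i j
    using that ij by (auto simp: g_def gcomm_m12_m24)
  have others: "gcomm UT (g i) (g j) = ut_one" if "i < j" "(i, j) \<noteq> (i0, j0)" for i j
    using that ij by (auto simp: g_def)
  show "relator_values UT g n \<subseteq> range elem14"
    using pair adjacent by (auto simp: relator_values_def)
  show "e45 (g i) = 0" for i
    by (simp add: g_def)
  have "listprod UT (map (\<lambda>(i, j). gcomm UT (g i) (g j) [^]\<^bsub>UT\<^esub> a i j) (index_pairs n))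
      = (\<lambda>(i, j). gcomm UT (g i) (g j) [^]\<^bsub>UT\<^esub> a i j) (i0, j0)"
  proof (rule group.listprod_single[OF UT_group distinct_index_pairs])
    show "(i0, j0) \<in> set (index_pairs n)"
      using ij by (simp add: set_index_pairs)
    fix p assume p: "p \<in> set (index_pairs n)" "p \<noteq> (i0, j0)"
    obtain i j where "p = (i, j)"
      by fastforce
    with p show "(\<lambda>(i, j). gcomm UT (g i) (g j) [^]\<^bsub>UT\<^esub> a i j) p = \<one>\<^bsub>UT\<^esub>"
      by (simp add: set_index_pairs others)
  qed simp
  moreover have "gcomm UT (g i0) (g j0) = elem14 1"
    using ij by (simp add: g_def gcomm_m12_m24)
  ultimately show "element_value UT g n a b c d = elem14 (a i0 j0)"
    unfolding element_value_def Let_def map_index_pairs adjacent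
    by (simp add: group.listprod_ones[OF UT_group] elem14_int_pow)
qed

text \<open>Test for \<open>b\<^sub>i\<close>, \<open>c\<^sub>i\<close>: send \<open>s\<^sub>i \<mapsto> P\<close>, \<open>s\<^sub>i\<^sub>+\<^sub>1 \<mapsto> Q\<close> and all other generators to \<open>1\<close>, where
  the relevant double commutators of \<open>P\<close>, \<open>Q\<close> lie in \<open>1 + \<int> E\<^sub>1\<^sub>4\<close>.  This yields one linear
  relation between \<open>b\<^sub>i\<close> and \<open>c\<^sub>i\<close>.\<close>

lemma triple_exponents_relation:
  fixes P Q :: "int ut5" and a :: "nat \<Rightarrow> nat \<Rightarrow> int"
  assumes x: "the_element n a b c d \<in> comm_subgrp (FG n) (RN n) (carrier (FG n))"
    and i0: "1 \<le> i0" "i0 \<le> n - 2"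
    and hP: "gcomm UT (gcomm UT P Q) P = elem14 u1"
    and hQ: "gcomm UT (gcomm UT P Q) Q = elem14 u2"
    and hC: "gcomm UT (gcomm UT P Q) (ut_mul P (ut_inv Q)) = elem14 u3"
    and eP: "e45 P = 0" and eQ: "e45 Q = 0"
  shows "b i0 * u1 + c i0 * u3 = 0"
proof (rule elem14_test[OF x])
  define g where "g k = (if k = i0 then P else if k = i0 + 1 then Q else ut_one)" for k
  show "e45 (g i) = 0" for i
    using eP eQ by (simp add: g_def)
  have adjacent: "gcomm UT (g i) (g (i+1)) = ut_one" if "i \<noteq> i0" for i
    using that by (auto simp: g_def)
  have distant: "gcomm UT (g i) (g j) = ut_one" if "i + 2 \<le> j" for i j
    using that by (auto simp: g_def)
  have quad: "gcomm UT (gcomm UT (g i) (g (i+1))) (gcomm UT (g (i+1)) (g (i+2))) = ut_one" for i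
  proof (cases "i = i0")
    case False
    then show ?thesis using adjacent by simp
  qed (simp add: g_def)
  have triple: "gcomm UT (gcomm UT (g i) (g (i+1))) (g i) \<in> range elem14
      \<and> gcomm UT (gcomm UT (g i) (g (i+1))) (g (i+1)) \<in> range elem14" for i
  proof (cases "i = i0")
    case False
    then show ?thesis using adjacent by simp
  qed (simp add: g_def hP hQ)
  show "relator_values UT g n \<subseteq> range elem14"
    using distant triple quad by (auto simp: relator_values_def)
  have "listprod UT (map (\<lambda>i. gcomm UT (gcomm UT (g i) (g (i+1))) (g i) [^]\<^bsub>UT\<^esub> b i) [1..<n-1])
      = (\<lambda>i. gcomm UT (gcomm UT (g i) (g (i+1))) (g i) [^]\<^bsub>UT\<^esub> b i) i0"
    by (rule group.listprod_single[OF UT_group distinct_upt]) (use i0 adjacent in auto)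
  moreover have "listprod UT (map (\<lambda>i. gcomm UT (gcomm UT (g i) (g (i+1)))
        (g i \<otimes>\<^bsub>UT\<^esub> inv\<^bsub>UT\<^esub> g (i+1)) [^]\<^bsub>UT\<^esub> c i) [1..<n-1])
      = (\<lambda>i. gcomm UT (gcomm UT (g i) (g (i+1))) (g i \<otimes>\<^bsub>UT\<^esub> inv\<^bsub>UT\<^esub> g (i+1)) [^]\<^bsub>UT\<^esub> c i) i0"
    by (rule group.listprod_single[OF UT_group distinct_upt]) (use i0 adjacent in auto)
  ultimately show "element_value UT g n a b c d = elem14 (b i0 * u1 + c i0 * u3)"
    unfolding element_value_def Let_def map_index_pairs quad
    by (simp add: distant group.listprod_ones[OF UT_group] case_prod_beta set_index_pairs
        g_def hP hC UT_inv elem14_int_pow elem14_mul)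
qed

lemma triple_exponents_zero:
  fixes a :: "nat \<Rightarrow> nat \<Rightarrow> int"
  assumes x: "the_element n a b c d \<in> comm_subgrp (FG n) (RN n) (carrier (FG n))"
    and i0: "1 \<le> i0" "i0 \<le> n - 2"
  shows "b i0 = 0 \<and> c i0 = 0"
proof -
  have "b i0 * 2 + c i0 * 2 = 0"
    by (rule triple_exponents_relation[OF x i0 gcomm_m12_34_m23(1-3)]) simp_all
  moreover have "b i0 * 0 + c i0 * 2 = 0"
    by (rule triple_exponents_relation[OF x i0 gcomm_m12_34_m23(4-6)]) simp_all
  ultimately show ?thesis
    by simp
qed

text \<open>Test for \<open>d\<^sub>i\<close>, once all \<open>a\<close>, \<open>b\<close>, \<open>c\<close> are known to vanish: over \<open>\<int>/2\<close>, send \<open>s\<^sub>i\<close>,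
  \<open>s\<^sub>i\<^sub>+\<^sub>1\<close>, \<open>s\<^sub>i\<^sub>+\<^sub>2\<close> to \<open>1 + E\<^sub>1\<^sub>2 + E\<^sub>3\<^sub>4\<close>, \<open>1 + E\<^sub>1\<^sub>5 + E\<^sub>2\<^sub>3 + E\<^sub>4\<^sub>5\<close>, \<open>1 + E\<^sub>1\<^sub>4 + E\<^sub>2\<^sub>5 + E\<^sub>3\<^sub>4\<close>.
  All relators then take central values, and the element evaluates to \<open>(1 + E\<^sub>1\<^sub>5)\<^bsup>d\<^sub>i\<^esup>\<close>.\<close>

lemma quad_exponent_zero:
  fixes a :: "nat \<Rightarrow> nat \<Rightarrow> int"
  assumes x: "the_element n a b c d \<in> comm_subgrp (FG n) (RN n) (carrier (FG n))"
    and i0: "1 \<le> i0" "i0 \<le> n - 3" and d01: "d i0 \<in> {0, 1}"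
    and a0: "\<forall>i j. 1 \<le> i \<and> i + 1 < j \<and> j \<le> n - 1 \<longrightarrow> a i j = 0"
    and bc0: "\<forall>i. 1 \<le> i \<and> i \<le> n - 2 \<longrightarrow> b i = 0 \<and> c i = 0"
  shows "d i0 = 0"
proof -
  define g :: "nat \<Rightarrow> bit ut5" where "g k = (if k = i0 then m12_34 else if k = i0 + 1 then m15_23_45
      else if k = i0 + 2 then m14_25_34 else ut_one)" for k
  interpret word_eval UT g
    by (rule word_eval_UT)
  have rel: "relator_values UT g n \<subseteq> {ut_one, elem15 1}"
    by (auto simp: relator_values_def g_def gcomm_mod2)
  have "r \<otimes>\<^bsub>UT\<^esub> g i = g i \<otimes>\<^bsub>UT\<^esub> r" if "r \<in> relator_values UT g n" for r i
    using subsetD[OF rel that] elem15_central by auto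
  then have "element_value UT g n a b c d = \<one>\<^bsub>UT\<^esub>"
    by (rule element_value_trivial[OF _ x])
  moreover have "element_value UT g n a b c d = elem15 1 [^]\<^bsub>UT\<^esub> d i0"
  proof -
    have "listprod UT (map (\<lambda>i. gcomm UT (gcomm UT (g i) (g (i+1))) (gcomm UT (g (i+1)) (g (i+2)))
          [^]\<^bsub>UT\<^esub> d i) [1..<n-2])
        = (\<lambda>i. gcomm UT (gcomm UT (g i) (g (i+1))) (gcomm UT (g (i+1)) (g (i+2))) [^]\<^bsub>UT\<^esub> d i) i0"
      by (rule group.listprod_single[OF UT_group distinct_upt]) (use i0 in \<open>auto simp: g_def\<close>)
    then show ?thesis
      using a0 bc0 i0 unfolding element_value_def Let_def map_index_pairs
      by (simp add: group.listprod_ones[OF UT_group] case_prod_beta set_index_pairs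
          g_def gcomm_mod2)
  qed
  moreover have "elem15 (1::bit) \<noteq> ut_one"
    by (simp add: elem15_def ut_one_def)
  ultimately show ?thesis
    using d01 by auto
qed

theorem mainTheorem5:
  fixes n :: nat and a :: "nat \<Rightarrow> nat \<Rightarrow> int" and b c d :: "nat \<Rightarrow> int"
  assumes "n \<ge> 3"
    and "\<forall>i. 1 \<le> i \<and> i \<le> n - 3 \<longrightarrow> d i \<in> {0, 1}"
    and "the_element n a b c d \<in> comm_subgrp (FG n) (RN n) (carrier (FG n))"
  shows "(\<forall>i j. 1 \<le> i \<and> i + 1 < j \<and> j \<le> n - 1 \<longrightarrow> a i j = 0)
       \<and> (\<forall>i. 1 \<le> i \<and> i \<le> n - 2 \<longrightarrow> b i = 0 \<and> c i = 0)
       \<and> (\<forall>i. 1 \<le> i \<and> i \<le> n - 3 \<longrightarrow> d i = 0)"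
proof -
  have a0: "\<forall>i j. 1 \<le> i \<and> i + 1 < j \<and> j \<le> n - 1 \<longrightarrow> a i j = 0"
    using pair_exponent_zero[OF assms(3)] by blast
  have bc0: "\<forall>i. 1 \<le> i \<and> i \<le> n - 2 \<longrightarrow> b i = 0 \<and> c i = 0"
    using triple_exponents_zero[OF assms(3)] by blast
  have d0: "\<forall>i. 1 \<le> i \<and> i \<le> n - 3 \<longrightarrow> d i = 0"
    using quad_exponent_zero[OF assms(3) _ _ _ a0 bc0] assms(2) by blast
  show ?thesis
    using a0 bc0 d0 by blast
qed

end
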